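(* For all $\alpha>0$, $\sigma^2>0$ and $\delta>0$, $$L\big(\psi_1(\alpha,\sigma^2);\delta\big)\le\psi_2(\alpha,\sigma^2;\delta).$$
   Context: For real $\alpha\ge0$, $\sigma^2\ge0$ with $(\alpha,\sigma^2)\ne(0,0)$: $\psi_1(\alpha,\sigma^2)=\int_0^{\pi/2}\frac{\alpha\sin^2\theta}{(\alpha^2\sin^2\theta+\sigma^2)^{1/2}}d\theta$ and $\psi_2(\alpha,\sigma^2;\delta)=\frac4\delta\big(\alpha^2+\sigma^2+1-\int_0^{\pi/2}\frac{2\alpha^2\sin^2\theta+\sigma^2}{(\alpha^2\sin^2\theta+\sigma^2)^{1/2}}d\theta\big)$. For $s\ge0$ let $\phi_1(s)=\int_0^{\pi/2}\frac{\sin^2\theta}{(\sin^2\theta+s^2)^{1/2}}d\theta$ (strictly decreasing, $\phi_1(0)=1$, $\phi_1(s)\to0$ as $s\to\infty$, with inverse $\phi_1^{-1}:(0,1]\to[0,\infty)$) and $\phi_2(s)=\int_0^{\pi/2}\frac{2\sin^2\theta+s^2}{(\sin^2\theta+s^2)^{1/2}}d\theta$. For $\alpha\in(0,1)$ and $\delta>0$ define $L(\alpha;\delta)=\frac4\delta\Big(1-\frac{\phi_2^2(\phi_1^{-1}(\alpha))}{4[1+(\phi_1^{-1}(\alpha))^2]}\Big)$. *)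

theory Defs
  imports "HOL-Analysis.Analysis"
begin

definition psi1 :: "real \<Rightarrow> real \<Rightarrow> real" where
  "psi1 \<alpha> \<sigma>2 = integral {0..pi/2}
     (\<lambda>\<theta>. \<alpha> * (sin \<theta>)^2 / sqrt (\<alpha>^2 * (sin \<theta>)^2 + \<sigma>2))"

definition psi2 :: "real \<Rightarrow> real \<Rightarrow> real \<Rightarrow> real" where
  "psi2 \<alpha> \<sigma>2 \<delta> = 4 / \<delta> * (\<alpha>^2 + \<sigma>2 + 1 - integral {0..pi/2}
     (\<lambda>\<theta>. (2 * \<alpha>^2 * (sin \<theta>)^2 + \<sigma>2) / sqrt (\<alpha>^2 * (sin \<theta>)^2 + \<sigma>2)))"

definition phi1 :: "real \<Rightarrow> real" where
  "phi1 s = integral {0..pi/2} (\<lambda>\<theta>. (sin \<theta>)^2 / sqrt ((sin \<theta>)^2 + s^2))"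

definition phi2 :: "real \<Rightarrow> real" where
  "phi2 s = integral {0..pi/2} (\<lambda>\<theta>. (2 * (sin \<theta>)^2 + s^2) / sqrt ((sin \<theta>)^2 + s^2))"

definition phi1_inv :: "real \<Rightarrow> real" where
  "phi1_inv a = (THE s. s \<ge> 0 \<and> phi1 s = a)"

definition L :: "real \<Rightarrow> real \<Rightarrow> real" where
  "L \<alpha> \<delta> = 4 / \<delta> * (1 - (phi2 (phi1_inv \<alpha>))^2 / (4 * (1 + (phi1_inv \<alpha>)^2)))"

end

theory Submission
  imports Defs
begin

text \<open>Substituting \<open>\<sigma>\<^sup>2 = \<alpha>\<^sup>2 s\<^sup>2\<close> turns \<open>\<psi>\<^sub>1\<close> into \<open>\<phi>\<^sub>1(s)\<close> and \<open>\<psi>\<^sub>2\<close> into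
  \<open>4/\<delta> (\<alpha>\<^sup>2 (1 + s\<^sup>2) + 1 - \<alpha> \<phi>\<^sub>2(s))\<close>, while \<open>\<phi>\<^sub>1\<^sup>-\<^sup>1(\<phi>\<^sub>1(s)) = s\<close> because \<open>\<phi>\<^sub>1\<close>
  is strictly decreasing. The claim then reduces to
  \<open>\<alpha> \<phi>\<^sub>2 \<le> \<alpha>\<^sup>2 (1 + s\<^sup>2) + \<phi>\<^sub>2\<^sup>2 / (4 (1 + s\<^sup>2))\<close>, i.e. to completing a square.\<close>

lemma continuous_on_phi1_integrand:
  fixes s :: real
  assumes "s \<ge> 0"
  shows "continuous_on {0..pi/2} (\<lambda>\<theta>. (sin \<theta>)^2 / sqrt ((sin \<theta>)^2 + s^2))"
proof (cases "s = 0")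
  case True
  have "sin \<theta> = (sin \<theta>)^2 / sqrt ((sin \<theta>)^2 + s^2)" if "\<theta> \<in> {0..pi/2}" for \<theta>
  proof -
    have "sin \<theta> \<ge> 0" using that by (intro sin_ge_zero) auto
    then show ?thesis using True by (simp add: power2_eq_square)
  qed
  moreover have "continuous_on {0..pi/2} sin" by (intro continuous_intros)
  ultimately show ?thesis using continuous_on_cong by (smt (verit))
next
  case False
  then have "sqrt ((sin \<theta>)^2 + s^2) \<noteq> 0" for \<theta>
    by (simp add: add_nonneg_pos)
  then show ?thesis by (intro continuous_intros) auto
qed

lemma phi1_strict_antimono:
  fixes s t :: real
  assumes "0 \<le> s" "s < t"
  shows "phi1 t < phi1 s"
  unfolding phi1_def
proof (rule integral_less_real)
  show "continuous_on {0..pi/2} (\<lambda>\<theta>. (sin \<theta>)^2 / sqrt ((sin \<theta>)^2 + t^2))"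
    and "continuous_on {0..pi/2} (\<lambda>\<theta>. (sin \<theta>)^2 / sqrt ((sin \<theta>)^2 + s^2))"
    using assms by (intro continuous_on_phi1_integrand; simp)+
  show "{0<..<pi/2} \<noteq> {}" by (simp add: not_le)
  fix x :: real
  assume "x \<in> {0<..<pi/2}"
  then have "sin x > 0" by (intro sin_gt_zero) auto
  moreover have "sqrt ((sin x)^2 + s^2) < sqrt ((sin x)^2 + t^2)"
    using assms by (simp add: power_strict_mono)
  ultimately show "(sin x)^2 / sqrt ((sin x)^2 + t^2) < (sin x)^2 / sqrt ((sin x)^2 + s^2)"
    by (intro divide_strict_left_mono) (auto simp: add_pos_nonneg)
qed

lemma phi1_inv_phi1:
  fixes s :: real
  assumes "s \<ge> 0"
  shows "phi1_inv (phi1 s) = s"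
  unfolding phi1_inv_def
proof (rule the_equality)
  show "0 \<le> s \<and> phi1 s = phi1 s" using assms by simp
  fix t
  assume "0 \<le> t \<and> phi1 t = phi1 s"
  then show "t = s"
    using phi1_strict_antimono assms by (metis less_irrefl linorder_neqE_linordered_idom)
qed

lemma L_phi1:
  fixes s \<delta> :: real
  assumes "s \<ge> 0"
  shows "L (phi1 s) \<delta> = 4 / \<delta> * (1 - (phi2 s)^2 / (4 * (1 + s^2)))"
  unfolding L_def phi1_inv_phi1[OF assms] ..

lemma sqrt_scaled_sum:
  fixes \<alpha> \<sigma>2 x :: real
  assumes "\<alpha> > 0" "\<sigma>2 \<ge> 0"
  shows "sqrt (\<alpha>^2 * x + \<sigma>2) = \<alpha> * sqrt (x + (sqrt \<sigma>2 / \<alpha>)^2)"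
proof -
  have "\<alpha>^2 * x + \<sigma>2 = \<alpha>^2 * (x + (sqrt \<sigma>2 / \<alpha>)^2)"
    using assms by (simp add: power_divide field_simps)
  then show ?thesis using assms by (simp add: real_sqrt_mult)
qed

lemma psi1_eq_phi1:
  fixes \<alpha> \<sigma>2 :: real
  assumes "\<alpha> > 0" "\<sigma>2 \<ge> 0"
  shows "psi1 \<alpha> \<sigma>2 = phi1 (sqrt \<sigma>2 / \<alpha>)"
  unfolding psi1_def phi1_def sqrt_scaled_sum[OF assms] using assms by simp

lemma psi2_eq_phi2:
  fixes \<alpha> \<sigma>2 \<delta> :: real
  assumes "\<alpha> > 0" "\<sigma>2 > 0"
  defines "s \<equiv> sqrt \<sigma>2 / \<alpha>"
  shows "psi2 \<alpha> \<sigma>2 \<delta> = 4 / \<delta> * (\<alpha>^2 * (1 + s^2) + 1 - \<alpha> * phi2 s)"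
proof -
  have \<sigma>2: "\<sigma>2 = \<alpha>^2 * s^2"
    using assms by (simp add: s_def power_divide)
  have "(2 * \<alpha>^2 * (sin \<theta>)^2 + \<sigma>2) / sqrt (\<alpha>^2 * (sin \<theta>)^2 + \<sigma>2)
      = \<alpha> * ((2 * (sin \<theta>)^2 + s^2) / sqrt ((sin \<theta>)^2 + s^2))" for \<theta>
  proof -
    define D where "D = sqrt ((sin \<theta>)^2 + s^2)"
    have "D > 0"
      using assms by (simp add: D_def s_def add_nonneg_pos)
    then show ?thesis
      using assms unfolding sqrt_scaled_sum[OF assms(1) less_imp_le[OF assms(2)]]
        s_def[symmetric] D_def[symmetric]
      by (simp add: \<sigma>2 power2_eq_square field_simps)
  qed
  then have "integral {0..pi/2}
      (\<lambda>\<theta>. (2 * \<alpha>^2 * (sin \<theta>)^2 + \<sigma>2) / sqrt (\<alpha>^2 * (sin \<theta>)^2 + \<sigma>2)) = \<alpha> * phi2 s"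
    unfolding phi2_def by (simp only: integral_mult_right)
  then show ?thesis
    unfolding psi2_def using \<sigma>2 by (simp add: algebra_simps)
qed

lemma mult_le_weighted_sum_squares:
  fixes a b c :: real
  assumes "c > 0"
  shows "a * b \<le> a^2 * c + b^2 / (4 * c)"
proof -
  have "a^2 * c + b^2 / (4 * c) - a * b = (2 * a * c - b)^2 / (4 * c)"
    using assms by (simp add: field_simps power2_eq_square)
  moreover have "(2 * a * c - b)^2 / (4 * c) \<ge> 0" using assms by simp
  ultimately show ?thesis by linarith
qed

theorem mainTheorem13:
  fixes \<alpha> \<sigma>2 \<delta> :: real
  assumes "\<alpha> > 0" and "\<sigma>2 > 0" and "\<delta> > 0"
  shows "L (psi1 \<alpha> \<sigma>2) \<delta> \<le> psi2 \<alpha> \<sigma>2 \<delta>"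
proof -
  define s where "s = sqrt \<sigma>2 / \<alpha>"
  have "s \<ge> 0" using assms by (simp add: s_def)
  have "\<alpha> * phi2 s \<le> \<alpha>^2 * (1 + s^2) + (phi2 s)^2 / (4 * (1 + s^2))"
    by (intro mult_le_weighted_sum_squares) (simp add: add_pos_nonneg)
  then have "1 - (phi2 s)^2 / (4 * (1 + s^2)) \<le> \<alpha>^2 * (1 + s^2) + 1 - \<alpha> * phi2 s"
    by linarith
  then have "L (phi1 s) \<delta> \<le> 4 / \<delta> * (\<alpha>^2 * (1 + s^2) + 1 - \<alpha> * phi2 s)"
    unfolding L_phi1[OF \<open>s \<ge> 0\<close>] using assms(3) by (intro mult_left_mono) auto
  then show ?thesis
    using assms by (simp add: s_def psi1_eq_phi1 psi2_eq_phi2)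
qed

end
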